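(* Let $(G,\mathcal{C})$ be a 2-colored graph, $G=(V,E)$, and let $l,u:E\to\mathbb{N}$ satisfy $l(e)\le u(e)$ for all $e\in E$. If there exists a rational vector $x\in\mathcal{A}(G,\mathcal{C})$ with $l(e)\le x(e)\le u(e)$ for all $e\in E$, then there exists an integral vector $y\in\mathcal{A}(G,\mathcal{C})$ with $2l(e)\le y(e)\le 2u(e)$ for all $e\in E$.
   Context: Graphs are finite, undirected, may have parallel edges but no loops; $\mathcal{C}:E\to\{R,B\}$ is a red/blue edge coloring. The alternating cone $\mathcal{A}(G,\mathcal{C})\subseteq\mathbb{R}^E$ is the set of $x$ with $x(e)\ge0$ for all $e$ and, at every vertex $v$, the sum of $x(e)$ over red edges at $v$ equals the sum of $x(e)$ over blue edges at $v$. *)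

theory Defs
  imports Complex_Main
begin

datatype color = Red | Blue

text \<open>A graph (V,E) with parallel edges allowed but no loops: edges are elements of
  an abstract type, each edge e has a set of endpoints ends e consisting of exactly
  two distinct vertices of V.\<close>
definition graph :: "'v set \<Rightarrow> 'e set \<Rightarrow> ('e \<Rightarrow> 'v set) \<Rightarrow> bool" where
  "graph V E ends \<longleftrightarrow> finite V \<and> finite E \<and> (\<forall>e\<in>E. ends e \<subseteq> V \<and> card (ends e) = 2)"

text \<open>Alternating cone; vectors in R^E are functions vanishing outside E.\<close>
definition alternating_cone ::
  "'v set \<Rightarrow> 'e set \<Rightarrow> ('e \<Rightarrow> 'v set) \<Rightarrow> ('e \<Rightarrow> color) \<Rightarrow> ('e \<Rightarrow> real) set" where
  "alternating_cone V E ends col =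
     {x. (\<forall>e. e \<notin> E \<longrightarrow> x e = 0) \<and> (\<forall>e\<in>E. 0 \<le> x e) \<and>
         (\<forall>v\<in>V. (\<Sum>e\<in>{e\<in>E. v \<in> ends e \<and> col e = Red}. x e) =
                 (\<Sum>e\<in>{e\<in>E. v \<in> ends e \<and> col e = Blue}. x e))}"

end

theory Submission
  imports Defs
begin

text \<open>
  Split every edge e into its half-edges (e, v), v \<in> ends e, and let the half-edge (e, w) be an
  arc between the copies (w, True) and (w', False) of the ends of e, where w' is the other end:
  directed towards (w, True) if e is red and away from it if e is blue. Conservation at (v, True)
  and at (v, False) says that red and blue half-edges balance at v, for the halves at v and for
  the halves at the far ends; adding the two, the sums g (e, v) + g (e, w') of the halves of the
  edges form a point of the alternating cone. Conversely, a point x of the cone gives a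
  circulation by putting x e on both halves of e. Passing to this bipartite double cover, where
  the alternating cone becomes a circulation cone, is what costs the factor 2.

  Circulations with integral bounds can be rounded to integral ones. Every node touched by an arc
  with fractional flow is touched by at least two of them, so these arcs touch at most as many
  nodes as there are such arcs, and the conservation laws at those nodes are dependent. Hence a
  nonzero circulation supported on the fractional arcs exists, and moving along it until some
  coordinate hits an integer makes one more arc integral while staying between floors and
  ceilings.
\<close>

lemma homogeneous_system_nontrivial_solution:
  fixes c :: "'n \<Rightarrow> 'i \<Rightarrow> real"
  assumes "finite P" "finite S" "card P < card S"
  shows "\<exists>d. (\<forall>i. i \<notin> S \<longrightarrow> d i = 0) \<and> (\<exists>i\<in>S. d i \<noteq> 0) \<and>
             (\<forall>n\<in>P. (\<Sum>i\<in>S. c n i * d i) = 0)"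
  using assms
proof (induction P arbitrary: S c rule: finite_induct)
  case empty
  then obtain i0 where "i0 \<in> S" by fastforce
  then show ?case by (intro exI[of _ "\<lambda>i. of_bool (i = i0)"]) auto
next
  case (insert p P)
  show ?case
  proof (cases "\<forall>i\<in>S. c p i = 0")
    case True
    with insert have "card P < card S" by simp
    with insert.IH[OF insert.prems(1) this, of c] True show ?thesis by auto
  next
    case False
    then obtain a where a: "a \<in> S" "c p a \<noteq> 0" by blast
    \<comment> \<open>Gaussian elimination: use equation p to eliminate the unknown a from the others.\<close>
    define S' where "S' = S - {a}"
    define c' where "c' = (\<lambda>n i. c n i - c n a * c p i / c p a)"
    have "finite S'" "card P < card S'" using insert a by (auto simp: S'_def)
    from insert.IH[OF this, of c'] obtain d' where
      d': "\<forall>i. i \<notin> S' \<longrightarrow> d' i = 0" "\<exists>i\<in>S'. d' i \<noteq> 0"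
        "\<forall>n\<in>P. (\<Sum>i\<in>S'. c' n i * d' i) = 0"
      by blast
    define d where "d = d'(a := - (\<Sum>i\<in>S'. c p i * d' i) / c p a)"
    have sum_S: "(\<Sum>i\<in>S. h i * d i) = h a * d a + (\<Sum>i\<in>S'. h i * d' i)" for h
    proof -
      have "(\<Sum>i\<in>S'. h i * d i) = (\<Sum>i\<in>S'. h i * d' i)"
        by (rule sum.cong) (auto simp: d_def S'_def)
      then show ?thesis using a insert.prems(1) by (simp add: S'_def sum.remove)
    qed
    have "(\<Sum>i\<in>S. c n i * d i) = 0" if "n \<in> insert p P" for n
    proof (cases "n = p")
      case True
      then show ?thesis using a by (simp only: sum_S) (simp add: d_def)
    next
      case False
      then have "0 = (\<Sum>i\<in>S'. c' n i * d' i)" using d'(3) that by simp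
      also have "\<dots> = (\<Sum>i\<in>S'. c n i * d' i) - c n a / c p a * (\<Sum>i\<in>S'. c p i * d' i)"
        by (simp add: c'_def sum_subtractf sum_distrib_left algebra_simps)
      also have "\<dots> = (\<Sum>i\<in>S. c n i * d i)"
        using a by (simp only: sum_S) (simp add: d_def)
      finally show ?thesis by simp
    qed
    moreover have "\<forall>i. i \<notin> S \<longrightarrow> d i = 0" "\<exists>i\<in>S. d i \<noteq> 0"
      using d'(1,2) a by (auto simp: d_def S'_def)
    ultimately show ?thesis by blast
  qed
qed

definition incidence :: "('a \<Rightarrow> 'n) \<Rightarrow> ('a \<Rightarrow> 'n) \<Rightarrow> 'n \<Rightarrow> 'a \<Rightarrow> real" where
  "incidence tail head n a = of_bool (head a = n) - of_bool (tail a = n)"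

definition circulation ::
  "'n set \<Rightarrow> 'a set \<Rightarrow> ('a \<Rightarrow> 'n) \<Rightarrow> ('a \<Rightarrow> 'n) \<Rightarrow> ('a \<Rightarrow> real) \<Rightarrow> bool" where
  "circulation N A tail head f \<longleftrightarrow> (\<forall>n\<in>N. (\<Sum>a\<in>A. incidence tail head n a * f a) = 0)"

lemma incidence_Ints: "incidence tail head n a \<in> \<int>"
  by (simp add: incidence_def)

lemma incidence_nonzero_iff:
  "incidence tail head n a \<noteq> 0 \<longleftrightarrow> tail a \<noteq> head a \<and> (n = tail a \<or> n = head a)"
  by (auto simp: incidence_def)

lemma incidence_nonzero_square:
  "incidence tail head n a \<noteq> 0 \<Longrightarrow> incidence tail head n a * incidence tail head n a = 1"
  by (auto simp: incidence_def)

lemma sum_incidence_nodes: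
  "finite M \<Longrightarrow> (\<Sum>n\<in>M. incidence tail head n a) = of_bool (head a \<in> M) - of_bool (tail a \<in> M)"
  by (simp add: incidence_def sum_subtractf)

lemma net_flow_eq:
  "finite A \<Longrightarrow> (\<Sum>a\<in>A. incidence tail head n a * f a) =
     (\<Sum>a\<in>{a\<in>A. head a = n}. f a) - (\<Sum>a\<in>{a\<in>A. tail a = n}. f a)"
  by (simp add: incidence_def left_diff_distrib sum_subtractf Collect_conj_eq)

lemma two_fractional_arcs_at_node:
  assumes "finite A" "circulation N A tail head f" "n \<in> N"
    and "a0 \<in> A" "f a0 \<notin> \<int>" "incidence tail head n a0 \<noteq> 0"
  shows "2 \<le> card {a\<in>A. f a \<notin> \<int> \<and> incidence tail head n a \<noteq> 0}"
proof (rule ccontr)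
  let ?inc = "incidence tail head n"
  let ?F = "{a\<in>A. f a \<notin> \<int> \<and> ?inc a \<noteq> 0}"
  assume "\<not> 2 \<le> card ?F"
  then have "card ?F \<le> Suc 0" by simp
  moreover have "a0 \<in> ?F" "finite ?F" using assms by auto
  ultimately have F: "?F = {a0}" by (auto simp: card_le_Suc0_iff_eq)
  have rest: "(\<Sum>a\<in>A - {a0}. ?inc a * f a) \<in> \<int>"
  proof (rule Ints_sum)
    fix a assume a: "a \<in> A - {a0}"
    then have "a \<notin> ?F" unfolding F by simp
    with a have "f a \<in> \<int> \<or> ?inc a = 0" by simp
    then show "?inc a * f a \<in> \<int>" by (elim disjE) (simp_all add: incidence_Ints)
  qed
  have "0 = (\<Sum>a\<in>A. ?inc a * f a)" using assms(2,3) by (simp add: circulation_def)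
  also have "\<dots> = ?inc a0 * f a0 + (\<Sum>a\<in>A - {a0}. ?inc a * f a)"
    using assms(1,4) by (simp add: sum.remove)
  finally have "?inc a0 * f a0 = - (\<Sum>a\<in>A - {a0}. ?inc a * f a)"
    by (simp add: eq_neg_iff_add_eq_0)
  then have "?inc a0 * f a0 \<in> \<int>" using rest by simp
  then have "?inc a0 * (?inc a0 * f a0) \<in> \<int>" by (rule Ints_mult[OF incidence_Ints])
  then show False
    using assms(5) incidence_nonzero_square[OF assms(6)] by (simp add: mult.assoc[symmetric])
qed

lemma circulation_direction_within_fractional_arcs:
  assumes finA: "finite A"
    and arcs: "\<forall>a\<in>A. tail a \<in> N \<and> head a \<in> N \<and> tail a \<noteq> head a"
    and f: "circulation N A tail head f"
    and S: "S = {a\<in>A. f a \<notin> \<int>}" "S \<noteq> {}"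
  shows "\<exists>d. (\<forall>a. a \<notin> S \<longrightarrow> d a = 0) \<and> (\<exists>a\<in>S. d a \<noteq> 0) \<and> circulation N A tail head d"
proof -
  let ?inc = "incidence tail head"
  define M where "M = tail ` S \<union> head ` S"
  have finS: "finite S" using finA S(1) by simp
  then have finM: "finite M" by (simp add: M_def)
  have ends_S: "{n\<in>M. ?inc n a \<noteq> 0} = {tail a, head a}" if "a \<in> S" for a
    using that arcs S(1) by (auto simp: M_def incidence_nonzero_iff)
  have deg: "2 \<le> card {a\<in>S. ?inc n a \<noteq> 0}" if n: "n \<in> M" for n
  proof -
    obtain a0 where a0: "a0 \<in> S" "n = tail a0 \<or> n = head a0" using n by (auto simp: M_def)
    have "n \<in> N" "?inc n a0 \<noteq> 0" using a0 arcs S(1) by (auto simp: incidence_nonzero_iff)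
    then show ?thesis using two_fractional_arcs_at_node[OF finA f, of n a0] a0(1) S(1) by simp
  qed
  have "2 * card M \<le> (\<Sum>n\<in>M. card {a\<in>S. ?inc n a \<noteq> 0})"
    using sum_mono[of M "\<lambda>_. 2", OF deg] by (simp add: mult.commute)
  also have "\<dots> = 2 * card S"
    by (rule sum_multicount) (use finM finS ends_S arcs S(1) in auto)
  finally have "card M \<le> card S" by simp
  obtain n0 where n0: "n0 \<in> M" using S(2) by (auto simp: M_def)
  have "card (M - {n0}) < card S"
    using n0 finM \<open>card M \<le> card S\<close> by (metis card_Diff1_less order_less_le_trans)
  then obtain d where d0: "\<forall>a. a \<notin> S \<longrightarrow> d a = 0" and "\<exists>a\<in>S. d a \<noteq> 0"
    and dM: "\<forall>n\<in>M - {n0}. (\<Sum>a\<in>S. ?inc n a * d a) = 0"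
    using homogeneous_system_nontrivial_solution[of "M - {n0}" S ?inc] finM finS by blast
  \<comment> \<open>The equation at n0 is the negated sum of the others, since every column of the
    incidence matrix sums to zero over M.\<close>
  have "(\<Sum>a\<in>S. ?inc n0 a * d a) = (\<Sum>n\<in>M. \<Sum>a\<in>S. ?inc n a * d a)"
    using dM n0 finM by (simp add: sum.remove)
  also have "\<dots> = (\<Sum>a\<in>S. (\<Sum>n\<in>M. ?inc n a) * d a)"
    by (simp add: sum.swap[of _ M] sum_distrib_right)
  also have "\<dots> = 0"
    unfolding sum_incidence_nodes[OF finM] by (simp add: M_def)
  finally have "(\<Sum>a\<in>S. ?inc n0 a * d a) = 0" .
  then have "(\<Sum>a\<in>S. ?inc n a * d a) = 0" for n
  proof (cases "n \<in> M")
    case False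
    then have "\<forall>a\<in>S. ?inc n a = 0" by (auto simp: M_def incidence_def)
    then show ?thesis by simp
  qed (use dM in blast)
  moreover have "(\<Sum>a\<in>A. ?inc n a * d a) = (\<Sum>a\<in>S. ?inc n a * d a)" for n
    by (rule sum.mono_neutral_right) (use finA d0 S(1) in auto)
  ultimately show ?thesis using d0 \<open>\<exists>a\<in>S. d a \<noteq> 0\<close> by (auto simp: circulation_def)
qed

lemma exists_shift_to_integer:
  fixes f d :: "'a \<Rightarrow> real"
  assumes "finite D" "D \<noteq> {}" "\<forall>a\<in>D. d a \<noteq> 0"
  shows "\<exists>t. (\<forall>a\<in>D. of_int \<lfloor>f a\<rfloor> \<le> f a + t * d a \<and> f a + t * d a \<le> of_int \<lceil>f a\<rceil>) \<and>
             (\<exists>a\<in>D. f a + t * d a \<in> \<int>)"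
proof -
  \<comment> \<open>r a is the step after which coordinate a reaches the next integer in direction d a.\<close>
  define r where "r a = (if d a > 0 then of_int \<lceil>f a\<rceil> - f a else of_int \<lfloor>f a\<rfloor> - f a) / d a" for a
  define t where "t = Min (r ` D)"
  have r_nonneg: "0 \<le> r a" if "a \<in> D" for a
    using that assms(3) by (auto simp: r_def divide_nonpos_neg)
  have t_le: "t \<le> r a" if "a \<in> D" for a
    using that assms(1) by (simp add: t_def)
  obtain a' where a': "a' \<in> D" "t = r a'"
    using assms(1,2) Min_in[of "r ` D"] unfolding t_def by blast
  have "0 \<le> t" using a' r_nonneg by simp
  have "of_int \<lfloor>f a\<rfloor> \<le> f a + t * d a \<and> f a + t * d a \<le> of_int \<lceil>f a\<rceil>" if a: "a \<in> D" for a
  proof (cases "d a > 0")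
    case True
    then have "t * d a \<le> r a * d a" using t_le[OF a] by (simp add: mult_right_mono)
    moreover have "r a * d a = of_int \<lceil>f a\<rceil> - f a" using True by (simp add: r_def)
    moreover have "0 \<le> t * d a" using True \<open>0 \<le> t\<close> by simp
    ultimately show ?thesis using of_int_floor_le[of "f a"] by linarith
  next
    case False
    then have neg: "d a < 0" using assms(3) a by force
    then have "r a * d a \<le> t * d a" using t_le[OF a] by (simp add: mult_right_mono_neg)
    moreover have "r a * d a = of_int \<lfloor>f a\<rfloor> - f a" using neg by (simp add: r_def)
    moreover have "t * d a \<le> 0" using neg \<open>0 \<le> t\<close> by (simp add: mult_nonneg_nonpos)
    ultimately show ?thesis using le_of_int_ceiling[of "f a"] by linarith
  qed
  moreover have "f a' + t * d a' \<in> \<int>"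
    using a' assms(3) by (cases "d a' > 0") (auto simp: r_def)
  ultimately show ?thesis using a'(1) by blast
qed

lemma circulation_fewer_fractional_arcs:
  fixes lo hi :: "'a \<Rightarrow> int"
  assumes finA: "finite A"
    and arcs: "\<forall>a\<in>A. tail a \<in> N \<and> head a \<in> N \<and> tail a \<noteq> head a"
    and f: "circulation N A tail head f"
    and bounds: "\<forall>a\<in>A. of_int (lo a) \<le> f a \<and> f a \<le> of_int (hi a)"
    and fractional: "{a\<in>A. f a \<notin> \<int>} \<noteq> {}"
  shows "\<exists>f'. circulation N A tail head f' \<and> (\<forall>a\<in>A. of_int (lo a) \<le> f' a \<and> f' a \<le> of_int (hi a)) \<and>
              card {a\<in>A. f' a \<notin> \<int>} < card {a\<in>A. f a \<notin> \<int>}"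
proof -
  define S where "S = {a\<in>A. f a \<notin> \<int>}"
  obtain d where d0: "\<forall>a. a \<notin> S \<longrightarrow> d a = 0" and "\<exists>a\<in>S. d a \<noteq> 0"
    and d: "circulation N A tail head d"
    using circulation_direction_within_fractional_arcs[OF finA arcs f S_def] fractional S_def by blast
  define D where "D = {a\<in>S. d a \<noteq> 0}"
  have "finite D" "D \<noteq> {}" "\<forall>a\<in>D. d a \<noteq> 0"
    using finA \<open>\<exists>a\<in>S. d a \<noteq> 0\<close> by (auto simp: D_def S_def)
  then obtain t a' where
    t: "\<forall>a\<in>D. of_int \<lfloor>f a\<rfloor> \<le> f a + t * d a \<and> f a + t * d a \<le> of_int \<lceil>f a\<rceil>"
    and a': "a' \<in> D" "f a' + t * d a' \<in> \<int>"
    using exists_shift_to_integer[of D d f] by blast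
  define f' where "f' a = f a + t * d a" for a
  have "(\<Sum>a\<in>A. incidence tail head n a * f' a) =
      (\<Sum>a\<in>A. incidence tail head n a * f a) + t * (\<Sum>a\<in>A. incidence tail head n a * d a)" for n
    by (simp add: f'_def algebra_simps sum.distrib sum_distrib_left)
  then have "circulation N A tail head f'"
    using f d by (simp add: circulation_def)
  moreover have "of_int (lo a) \<le> f' a \<and> f' a \<le> of_int (hi a)" if a: "a \<in> A" for a
  proof (cases "a \<in> D")
    case True
    have "of_int (lo a) \<le> (of_int \<lfloor>f a\<rfloor> :: real)" "(of_int \<lceil>f a\<rceil> :: real) \<le> of_int (hi a)"
      using bounds a by (simp_all add: le_floor_iff ceiling_le_iff)
    then show ?thesis using bspec[OF t True] unfolding f'_def by linarith
  next
    case False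
    then have "d a = 0" using d0 by (auto simp: D_def)
    then show ?thesis using bounds a by (simp add: f'_def)
  qed
  moreover have "card {a\<in>A. f' a \<notin> \<int>} < card S"
  proof -
    have "finite S" using finA by (simp add: S_def)
    moreover have "{a\<in>A. f' a \<notin> \<int>} \<subseteq> S - {a'}"
      using d0 a' by (auto simp: f'_def S_def)
    ultimately have "card {a\<in>A. f' a \<notin> \<int>} \<le> card (S - {a'})"
      by (intro card_mono) auto
    also have "\<dots> < card S"
      using a' \<open>finite S\<close> by (intro card_Diff1_less) (auto simp: D_def)
    finally show ?thesis .
  qed
  ultimately show ?thesis unfolding S_def by blast
qed

lemma circulation_integral_rounding:
  fixes lo hi :: "'a \<Rightarrow> int"
  assumes "finite A" "\<forall>a\<in>A. tail a \<in> N \<and> head a \<in> N \<and> tail a \<noteq> head a"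
    and "circulation N A tail head f" "\<forall>a\<in>A. of_int (lo a) \<le> f a \<and> f a \<le> of_int (hi a)"
  shows "\<exists>g. circulation N A tail head g \<and> (\<forall>a\<in>A. g a \<in> \<int> \<and> of_int (lo a) \<le> g a \<and> g a \<le> of_int (hi a))"
  using assms(3,4)
proof (induction "card {a\<in>A. f a \<notin> \<int>}" arbitrary: f rule: less_induct)
  case less
  show ?case
  proof (cases "{a\<in>A. f a \<notin> \<int>} = {}")
    case True
    then show ?thesis using less.prems by blast
  next
    case False
    then show ?thesis
      using circulation_fewer_fractional_arcs[OF assms(1,2) less.prems False] less.hyps by blast
  qed
qed

definition other_end :: "('e \<Rightarrow> 'v set) \<Rightarrow> 'e \<Rightarrow> 'v \<Rightarrow> 'v" where
  "other_end ends e w = the_elem (ends e - {w})"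

lemma other_end:
  assumes "card (ends e) = 2" "w \<in> ends e"
  shows "other_end ends e w \<in> ends e" "other_end ends e w \<noteq> w"
    "ends e = {w, other_end ends e w}" "other_end ends e (other_end ends e w) = w"
proof -
  obtain p q where pq: "p \<noteq> q" "ends e = {p, q}" using assms(1) by (meson card_2_iff)
  then have "ends e - {p} = {q}" "ends e - {q} = {p}" by auto
  then have "other_end ends e p = q" "other_end ends e q = p" by (simp_all add: other_end_def)
  with pq assms(2) show "other_end ends e w \<in> ends e" "other_end ends e w \<noteq> w"
    "ends e = {w, other_end ends e w}" "other_end ends e (other_end ends e w) = w"
    by auto
qed

lemma other_end_eq_iff:
  assumes "card (ends e) = 2" "w \<in> ends e"
  shows "other_end ends e w = v \<longleftrightarrow> v \<in> ends e \<and> v \<noteq> w"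
  using other_end[of ends e w, OF assms] by auto

lemma color_neq_Red_iff [simp]: "c \<noteq> Red \<longleftrightarrow> c = Blue"
  by (cases c) auto

definition cover_head :: "('e \<Rightarrow> 'v set) \<Rightarrow> ('e \<Rightarrow> color) \<Rightarrow> 'e \<times> 'v \<Rightarrow> 'v \<times> bool" where
  "cover_head ends col =
     (\<lambda>(e, w). if col e = Red then (w, True) else (other_end ends e w, False))"

definition cover_tail :: "('e \<Rightarrow> 'v set) \<Rightarrow> ('e \<Rightarrow> color) \<Rightarrow> 'e \<times> 'v \<Rightarrow> 'v \<times> bool" where
  "cover_tail ends col =
     (\<lambda>(e, w). if col e = Red then (other_end ends e w, False) else (w, True))"

lemma cover_arc_ends:
  assumes "graph V E ends" "a \<in> Sigma E ends"
  shows "cover_tail ends col a \<in> V \<times> UNIV" "cover_head ends col a \<in> V \<times> UNIV"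
    "cover_tail ends col a \<noteq> cover_head ends col a"
proof -
  obtain e w where a: "a = (e, w)" "e \<in> E" "w \<in> ends e" using assms(2) by blast
  then have "w \<in> V" "other_end ends e w \<in> V"
    using assms(1) other_end(1)[of ends e w] by (auto simp: graph_def)
  then show "cover_tail ends col a \<in> V \<times> UNIV" "cover_head ends col a \<in> V \<times> UNIV"
    "cover_tail ends col a \<noteq> cover_head ends col a"
    using a by (auto simp: cover_tail_def cover_head_def)
qed

lemma cover_arcs_at:
  assumes "\<forall>e\<in>E. card (ends e) = 2"
  shows "{a\<in>Sigma E ends. cover_head ends col a = (v, True)} = (\<lambda>e. (e, v)) ` {e\<in>E. v \<in> ends e \<and> col e = Red}"
    and "{a\<in>Sigma E ends. cover_tail ends col a = (v, True)} = (\<lambda>e. (e, v)) ` {e\<in>E. v \<in> ends e \<and> col e = Blue}"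
    and "{a\<in>Sigma E ends. cover_head ends col a = (v, False)} =
      (\<lambda>e. (e, other_end ends e v)) ` {e\<in>E. v \<in> ends e \<and> col e = Blue}"
    and "{a\<in>Sigma E ends. cover_tail ends col a = (v, False)} =
      (\<lambda>e. (e, other_end ends e v)) ` {e\<in>E. v \<in> ends e \<and> col e = Red}"
proof -
  have other_in: "other_end ends e v \<in> ends e" if "e \<in> E" "v \<in> ends e" for e
    using assms that other_end(1)[of ends e v] by blast
  have other_swap: "other_end ends e w = v \<longleftrightarrow> v \<in> ends e \<and> w = other_end ends e v"
    if "e \<in> E" "w \<in> ends e" for e w
    using assms that other_end_eq_iff[of ends e] by metis
  show "{a\<in>Sigma E ends. cover_head ends col a = (v, True)} = (\<lambda>e. (e, v)) ` {e\<in>E. v \<in> ends e \<and> col e = Red}"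
    by (auto simp: cover_head_def split: if_splits)
  show "{a\<in>Sigma E ends. cover_tail ends col a = (v, True)} = (\<lambda>e. (e, v)) ` {e\<in>E. v \<in> ends e \<and> col e = Blue}"
    by (auto simp: cover_tail_def split: if_splits)
  show "{a\<in>Sigma E ends. cover_head ends col a = (v, False)} =
      (\<lambda>e. (e, other_end ends e v)) ` {e\<in>E. v \<in> ends e \<and> col e = Blue}"
    by (auto simp: cover_head_def other_swap other_in split: if_splits)
  show "{a\<in>Sigma E ends. cover_tail ends col a = (v, False)} =
      (\<lambda>e. (e, other_end ends e v)) ` {e\<in>E. v \<in> ends e \<and> col e = Red}"
    by (auto simp: cover_tail_def other_swap other_in split: if_splits)
qed

lemma finite_half_edges:
  assumes "graph V E ends"
  shows "finite (Sigma E ends)"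
proof (rule finite_SigmaI)
  show "finite E" using assms by (simp add: graph_def)
  show "finite (ends e)" if "e \<in> E" for e
    using assms that by (intro card_ge_0_finite) (simp add: graph_def)
qed

lemma circulation_cover_iff:
  assumes "graph V E ends"
  shows "circulation (V \<times> UNIV) (Sigma E ends) (cover_tail ends col) (cover_head ends col) g \<longleftrightarrow>
    (\<forall>v\<in>V. (\<Sum>e\<in>{e\<in>E. v \<in> ends e \<and> col e = Red}. g (e, v)) =
              (\<Sum>e\<in>{e\<in>E. v \<in> ends e \<and> col e = Blue}. g (e, v)) \<and>
            (\<Sum>e\<in>{e\<in>E. v \<in> ends e \<and> col e = Red}. g (e, other_end ends e v)) =
              (\<Sum>e\<in>{e\<in>E. v \<in> ends e \<and> col e = Blue}. g (e, other_end ends e v)))"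
proof -
  have "\<forall>e\<in>E. card (ends e) = 2" using assms by (simp add: graph_def)
  note arcs_at = cover_arcs_at[OF this]
  have "sum g ((\<lambda>e. (e, h e)) ` X) = (\<Sum>e\<in>X. g (e, h e))" for h X
    by (simp add: sum.reindex inj_on_def)
  then show ?thesis
    using finite_half_edges[OF assms]
    by (auto simp: circulation_def net_flow_eq arcs_at split_paired_Ball_Sigma UNIV_bool)
qed

lemma cover_circulation_of_alternating_cone:
  assumes "graph V E ends" "x \<in> alternating_cone V E ends col"
  shows "circulation (V \<times> UNIV) (Sigma E ends) (cover_tail ends col) (cover_head ends col) (\<lambda>a. x (fst a))"
  using assms by (simp add: circulation_cover_iff alternating_cone_def)

definition join_halves :: "'e set \<Rightarrow> ('e \<Rightarrow> 'v set) \<Rightarrow> ('e \<times> 'v \<Rightarrow> real) \<Rightarrow> 'e \<Rightarrow> real" where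
  "join_halves E ends g e = (if e \<in> E then \<Sum>w\<in>ends e. g (e, w) else 0)"

lemma join_halves_split:
  assumes "graph V E ends" "e \<in> E" "v \<in> ends e"
  shows "join_halves E ends g e = g (e, v) + g (e, other_end ends e v)"
proof -
  define u where "u = other_end ends e v"
  have "ends e = {v, u}" "u \<noteq> v"
    using assms other_end[of ends e v] by (auto simp: graph_def u_def)
  then show ?thesis using assms(2) by (simp add: join_halves_def u_def)
qed

lemma join_halves_in_alternating_cone:
  assumes G: "graph V E ends"
    and g: "circulation (V \<times> UNIV) (Sigma E ends) (cover_tail ends col) (cover_head ends col) g"
    and g_nonneg: "\<forall>a\<in>Sigma E ends. 0 \<le> g a"
  shows "join_halves E ends g \<in> alternating_cone V E ends col"
proof -
  have "(\<Sum>e\<in>{e\<in>E. v \<in> ends e \<and> col e = c}. join_halves E ends g e) =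
      (\<Sum>e\<in>{e\<in>E. v \<in> ends e \<and> col e = c}. g (e, v)) +
      (\<Sum>e\<in>{e\<in>E. v \<in> ends e \<and> col e = c}. g (e, other_end ends e v))" for v c
    unfolding sum.distrib[symmetric] by (rule sum.cong) (auto simp: join_halves_split[OF G])
  moreover have "0 \<le> (\<Sum>w\<in>ends e. g (e, w))" if "e \<in> E" for e
    using g_nonneg that by (simp add: sum_nonneg)
  ultimately show ?thesis
    using g G by (simp add: alternating_cone_def circulation_cover_iff join_halves_def)
qed

theorem theorem3p1:
  fixes V :: "'v set" and E :: "'e set" and ends :: "'e \<Rightarrow> 'v set"
    and col :: "'e \<Rightarrow> color" and l u :: "'e \<Rightarrow> nat"
  assumes "graph V E ends"
    and "\<forall>e\<in>E. l e \<le> u e"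
    and "\<exists>x\<in>alternating_cone V E ends col. (\<forall>e\<in>E. x e \<in> \<rat> \<and> real (l e) \<le> x e \<and> x e \<le> real (u e))"
  shows "\<exists>y\<in>alternating_cone V E ends col. (\<forall>e\<in>E. y e \<in> \<int> \<and> 2 * real (l e) \<le> y e \<and> y e \<le> 2 * real (u e))"
proof -
  obtain x where x: "x \<in> alternating_cone V E ends col"
    and x_bounds: "\<forall>e\<in>E. real (l e) \<le> x e \<and> x e \<le> real (u e)"
    using assms(3) by blast
  obtain g where
    g: "circulation (V \<times> UNIV) (Sigma E ends) (cover_tail ends col) (cover_head ends col) g"
    and g_bounds: "\<forall>a\<in>Sigma E ends. g a \<in> \<int> \<and> real (l (fst a)) \<le> g a \<and> g a \<le> real (u (fst a))"
    using circulation_integral_rounding[OF finite_half_edges[OF assms(1)] _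
        cover_circulation_of_alternating_cone[OF assms(1) x],
        of "\<lambda>a. int (l (fst a))" "\<lambda>a. int (u (fst a))"]
      cover_arc_ends[OF assms(1)] x_bounds by auto
  have "join_halves E ends g \<in> alternating_cone V E ends col"
    using join_halves_in_alternating_cone[OF assms(1) g] g_bounds by force
  moreover have "join_halves E ends g e \<in> \<int> \<and> 2 * real (l e) \<le> join_halves E ends g e \<and>
      join_halves E ends g e \<le> 2 * real (u e)" if e: "e \<in> E" for e
  proof -
    have "card (ends e) = 2" using assms(1) e by (simp add: graph_def)
    moreover have "join_halves E ends g e = (\<Sum>w\<in>ends e. g (e, w))"
      using e by (simp add: join_halves_def)
    moreover have "(\<Sum>w\<in>ends e. real (l e)) \<le> (\<Sum>w\<in>ends e. g (e, w))"
      and "(\<Sum>w\<in>ends e. g (e, w)) \<le> (\<Sum>w\<in>ends e. real (u e))"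
      using g_bounds e by (intro sum_mono; simp)+
    moreover have "(\<Sum>w\<in>ends e. g (e, w)) \<in> \<int>"
      using g_bounds e by (intro Ints_sum) simp
    ultimately show ?thesis by simp
  qed
  ultimately show ?thesis by blast
qed

end
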